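(* Let $z_0\in\mathbb C\setminus\{0\}$ and let $S_n=z_0+\sum_{j=1}^nX_j$, where $X_1,X_2,\dots$ are i.i.d. with $\mathbf P(X_1=\sqrt2)=\mathbf P(X_1=-\sqrt2)=\mathbf P(X_1=i\sqrt2)=\mathbf P(X_1=-i\sqrt2)=1/4$. Let $\Theta(n)=\sum_{k=1}^n\phi(k)$, where $\phi(k)=0$ if $S_{k-1},S_k$ and $0$ are collinear, and otherwise $\phi(k)$ is the unique number in $(-\pi,\pi)$ with $\frac{S_{k-1}}{|S_{k-1}|}e^{i\phi(k)}=\frac{S_k}{|S_k|}$. Then there is a constant $C$ (independent of $z_0$ and $n$) such that for all $n\ge2$, $$\mathbf E\sup_{1\le k\le n}|\Theta(k)|^2\le C\log^2n.$$ *)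

theory Defs
  imports "HOL-Probability.Probability"
begin

definition step_pmf :: "complex pmf" where
  "step_pmf = pmf_of_set {complex_of_real (sqrt 2), - complex_of_real (sqrt 2),
                          \<i> * complex_of_real (sqrt 2), - (\<i> * complex_of_real (sqrt 2))}"

definition walk :: "complex \<Rightarrow> complex list \<Rightarrow> nat \<Rightarrow> complex" where
  "walk z0 xs k = z0 + (\<Sum>j<k. xs ! j)"

definition phi :: "complex \<Rightarrow> complex \<Rightarrow> real" where
  "phi a b = (if collinear {a, b, 0} then 0
              else (THE t. - pi < t \<and> t < pi \<and>
                      (a / complex_of_real (cmod a)) * exp (\<i> * complex_of_real t)
                        = b / complex_of_real (cmod b)))"

definition Theta :: "complex \<Rightarrow> complex list \<Rightarrow> nat \<Rightarrow> real" where
  "Theta z0 xs n = (\<Sum>k=1..n. phi (walk z0 xs (k - 1)) (walk z0 xs k))"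

end

theory Submission
  imports Defs "HOL-Analysis.Harmonic_Numbers"
begin

text \<open>
  Write \<open>Theta = M + D\<close>, where \<open>D k = (\<Sum>j<k. d (S j))\<close> with \<open>d a\<close> the mean angle increment
  from \<open>a\<close>, and \<open>M\<close> is the martingale of centred increments. Expanding \<open>Im (Ln (1 + x / a))\<close> to second
  order gives \<open>\<bar>d a\<bar> \<lesssim> min 1 \<bar>a\<bar>\<^sup>-\<^sup>3\<close>, and the conditional variance of an increment is
  \<open>\<lesssim> min 1 \<bar>a\<bar>\<^sup>-\<^sup>2\<close>. In the coordinates \<open>(Re z \<plusminus> Im z) / sqrt 2\<close> the walk is a pair of independent
  simple random walks, each of which lies in a given interval of length \<open>R\<close> at time \<open>m\<close> with
  probability \<open>\<lesssim> (R + 1) / sqrt m\<close>; summing over dyadic scales gives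
  \<open>E (min 1 \<bar>S m\<bar>\<^sup>-\<^sup>2) \<lesssim> (1 + ln m) / m\<close> and \<open>E (min 1 \<bar>S m\<bar>\<^sup>-\<^sup>3) \<lesssim> 1 / m\<close>.
  Doob's \<open>L\<^sup>2\<close> inequality then bounds \<open>E (max M\<^sup>2)\<close> by \<open>\<Sum>m<n. (1 + ln m) / m \<lesssim> ln\<^sup>2 n\<close>, while
  expanding \<open>(\<Sum>j<n. \<bar>d (S j)\<bar>)\<^sup>2\<close> and using the Markov property bounds \<open>E D\<^sup>2\<close> by
  \<open>(\<Sum>m<n. 1 / m)\<^sup>2 \<lesssim> ln\<^sup>2 n\<close>.
\<close>

lemma square_le_of_abs_le: "\<bar>x::real\<bar> \<le> b \<Longrightarrow> x^2 \<le> b^2"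
  using power_mono[of "\<bar>x\<bar>" b 2] by simp

lemma pi_le_3_15: "pi \<le> 3.15" using pi_approx by (simp add: abs_le_iff)

lemma sqrt2_bounds: "1.4 \<le> sqrt (2::real)" "sqrt (2::real) \<le> 1.5"
proof -
  show "1.4 \<le> sqrt (2::real)" by (rule real_le_rsqrt) (simp add: power2_eq_square)
  have "sqrt (2::real) \<le> sqrt 2.25" by (rule real_sqrt_le_mono) simp
  also have "sqrt (2.25::real) = 1.5" by (rule real_sqrt_unique) (simp_all add: power2_eq_square)
  finally show "sqrt (2::real) \<le> 1.5" .
qed

lemma ln_ge_two_thirds: "n \<ge> 2 \<Longrightarrow> ln (real n) \<ge> 2/3"
proof -
  assume "n \<ge> 2"
  then have "ln 2 \<le> ln (real n)" by simp
  then show ?thesis using ln2_ge_two_thirds by linarith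
qed

lemma has_field_derivative_Ln_1_plus: "Re (1 + u) > 0 \<Longrightarrow> ((\<lambda>u. Ln (1 + u)) has_field_derivative inverse (1 + u)) (at u within S)"
proof -
  assume r: "Re (1 + u) > 0"
  have "1 + u \<notin> \<real>\<^sub>\<le>\<^sub>0" using r by (auto simp: complex_nonpos_Reals_iff)
  then have l: "(Ln has_field_derivative inverse (1 + u)) (at (1 + u))" by (rule has_field_derivative_Ln)
  have g: "((\<lambda>u. 1 + u) has_field_derivative 1) (at u)" by (auto intro!: derivative_eq_intros)
  have "((\<lambda>u. Ln (1 + u)) has_field_derivative inverse (1 + u) * 1) (at u)"
    by (rule DERIV_chain2[OF l g])
  then show ?thesis by (simp add: has_field_derivative_at_within)
qed

lemma Re_1_plus_pos: "cmod u \<le> 1/2 \<Longrightarrow> Re (1 + u) > 0"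
  using abs_Re_le_cmod[of u] by simp

lemma norm_inverse_1_plus_le: "cmod u \<le> 1/2 \<Longrightarrow> cmod (inverse (1 + u)) \<le> 2"
proof -
  assume u: "cmod u \<le> 1/2"
  have "1 \<le> cmod (1 + u) + cmod u" using norm_triangle_ineq4[of "1 + u" u] by simp
  then have "inverse (cmod (1 + u)) \<le> inverse (1/2)" using u by (intro le_imp_inverse_le) auto
  then show ?thesis by (simp add: norm_inverse)
qed

lemma norm_Ln_1_plus_le:
  assumes "cmod w \<le> 1/2"
  shows "cmod (Ln (1 + w)) \<le> 2 * cmod w"
proof -
  have "cmod (Ln (1 + w) - Ln (1 + 0)) \<le> 2 * cmod (w - 0)"
    using assms
    by (intro field_differentiable_bound[where f'="\<lambda>u. inverse (1 + u)" and S="cball 0 (cmod w)"])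
       (auto intro!: has_field_derivative_Ln_1_plus Re_1_plus_pos norm_inverse_1_plus_le)
  then show ?thesis by simp
qed

lemma norm_Ln_1_plus_remainder_le:
  assumes w: "cmod w \<le> 1/2"
  shows "cmod (Ln (1 + w) - w + w^2/2) \<le> 2 * cmod w ^ 3"
proof -
  let ?S = "cball (0::complex) (cmod w)"
  have small: "cmod u \<le> 1/2" if "u \<in> ?S" for u using that w by simp
  have d: "((\<lambda>u. Ln (1 + u) - u + u^2/2) has_field_derivative (u^2 / (1 + u))) (at u within ?S)"
    if "u \<in> ?S" for u
  proof -
    have "((\<lambda>u. Ln (1 + u) - u + u^2/2) has_field_derivative (inverse (1 + u) - 1 + u)) (at u within ?S)"
      using Re_1_plus_pos[OF small[OF that]]
      by (auto intro!: derivative_eq_intros simp: complex_nonpos_Reals_iff)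
    moreover have "1 + u \<noteq> 0" using Re_1_plus_pos[OF small[OF that]] by (auto simp: complex_eq_iff)
    then have "inverse (1 + u) - 1 + u = u^2 / (1 + u)" by (simp add: field_simps power2_eq_square)
    ultimately show ?thesis by simp
  qed
  have b: "cmod (u^2 / (1 + u)) \<le> 2 * cmod w ^ 2" if "u \<in> ?S" for u
  proof -
    have "cmod (u^2 / (1 + u)) = cmod u ^ 2 * cmod (inverse (1 + u))"
      by (simp add: norm_divide norm_power divide_inverse norm_mult)
    also have "\<dots> \<le> cmod w ^ 2 * 2"
      using that norm_inverse_1_plus_le[OF small[OF that]] by (intro mult_mono power_mono) auto
    finally show ?thesis by simp
  qed
  have "cmod ((Ln (1 + w) - w + w^2/2) - (Ln (1 + 0) - 0 + 0^2/2)) \<le> (2 * cmod w ^ 2) * cmod (w - 0)"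
    by (rule field_differentiable_bound[where S="?S", OF _ d b]) auto
  then show ?thesis by (simp add: power3_eq_cube power2_eq_square mult.assoc)
qed

lemma binomial_middle_Suc: "(n + 1) * ((2*n+1) choose n) = (2*n+1) * ((2*n) choose n)"
  "((2*n+2) choose (n+1)) = 2 * ((2*n+1) choose n)"
proof -
  have s: "(2*n+1) choose (n+1) = (2*n+1) choose n"
    using binomial_symmetric[of n "2*n+1"] by simp
  have "Suc n * (Suc (2*n) choose Suc n) = Suc (2*n) * ((2*n) choose n)" by (rule Suc_times_binomial)
  then show "(n + 1) * ((2*n+1) choose n) = (2*n+1) * ((2*n) choose n)" using s by simp
  have "Suc n * (Suc (2*n+1) choose Suc n) = Suc (2*n+1) * ((2*n+1) choose n)" by (rule Suc_times_binomial)
  then have "(n+1) * ((2*n+2) choose (n+1)) = (n+1) * (2 * ((2*n+1) choose n))" by simp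
  then show "((2*n+2) choose (n+1)) = 2 * ((2*n+1) choose n)" by (metis mult_left_cancel Suc_eq_plus1 nat.distinct(1))
qed

lemma central_binomial_sq_le: "real ((2*n) choose n) ^ 2 * (2*n+1) \<le> 16 ^ n"
proof (induction n)
  case 0 then show ?case by simp
next
  case (Suc n)
  define c where "c = real ((2*n) choose n)"
  have e1: "real (n+1) * real ((2*n+1) choose n) = (2*n+1) * c"
    using arg_cong[OF binomial_middle_Suc(1)[of n], of real] unfolding c_def of_nat_mult by simp
  have e2: "real ((2*Suc n) choose Suc n) = 2 * real ((2*n+1) choose n)"
    using arg_cong[OF binomial_middle_Suc(2)[of n], of real] by simp
  define X where "X = real ((2*n+1) choose n)"
  have "real (n+1) * X = (2*n+1) * c" using e1 by (simp only: X_def)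
  then have Xe: "X = (2*n+1) * c / (n+1)" by (simp add: field_simps)
  have e3: "real ((2*Suc n) choose Suc n) = 2 * (2*n+1) * c / (n+1)"
    unfolding e2 X_def[symmetric] Xe by simp
  have IH: "c^2 * (2 * real n + 1) \<le> 16^n" using Suc.IH by (simp add: c_def add.commute)
  have np: "(real n + 1) > 0" by simp
  have "real ((2*Suc n) choose Suc n) ^ 2 * real (2*Suc n+1)
      = (c^2 * (2 * real n + 1)) * (4 * (2 * real n + 1) * (2 * real n + 3) / (real n + 1)^2)"
    unfolding e3 using np by (simp add: field_simps power2_eq_square)
  also have "\<dots> \<le> 16^n * 16"
  proof (rule mult_mono)
    have "4 * (2*real n+1) * (2*real n+3) \<le> 16 * (real n+1)^2" by (simp add: power2_eq_square algebra_simps)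
    then show "4 * (2*real n+1) * (2*real n+3) / (real n+1)^2 \<le> 16" using np by (simp add: divide_le_eq)
  qed (use IH in auto)
  finally show ?case by simp
qed

lemma binomial_sq_le_4_pow: assumes "m \<ge> 1" shows "real (m choose k) ^ 2 * m \<le> 4 ^ m"
proof (cases "even m")
  case True
  then obtain n where m: "m = 2*n" by blast
  have "real (m choose k) ^ 2 * m \<le> real ((2*n) choose n) ^ 2 * (2*n+1)"
    unfolding m using binomial_maximum'[of n k] by (intro mult_mono power_mono) auto
  also have "\<dots> \<le> 16 ^ n" by (rule central_binomial_sq_le)
  also have "\<dots> = 4 ^ m" by (simp add: m power_mult)
  finally show ?thesis .
next
  case False
  then obtain n where m: "m = 2*n+1" using oddE by blast
  define c where "c = real ((2*n) choose n)"
  have mx: "(2*n+1) choose k \<le> (2*n+1) choose n" using binomial_maximum[of "2*n+1" k] by simp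
  have np: "(real n + 1) > 0" by simp
  have e1: "real ((2*n+1) choose n) = (2 * real n + 1) * c / (real n + 1)"
  proof -
    have "real (n + 1) * real ((2*n+1) choose n) = real (2*n+1) * c"
      using arg_cong[OF binomial_middle_Suc(1)[of n], of real] unfolding c_def of_nat_mult by simp
    then show ?thesis using np by (simp add: field_simps)
  qed
  have "real (m choose k) ^ 2 * real m \<le> real ((2*n+1) choose n) ^ 2 * (2 * real n + 1)"
    unfolding m using mx by (intro mult_mono power_mono) auto
  also have "\<dots> = (c^2 * (2 * real n + 1)) * ((2 * real n + 1)^2 / (real n + 1)^2)"
    unfolding e1 using np by (simp add: field_simps power2_eq_square)
  also have "\<dots> \<le> 16^n * 4"
  proof (rule mult_mono)
    show "c^2 * (2 * real n + 1) \<le> 16^n" using central_binomial_sq_le[of n] by (simp add: c_def add.commute)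
    have "(2*real n+1)^2 \<le> 4 * (real n+1)^2" by (simp add: power2_eq_square algebra_simps)
    then show "(2*real n+1)^2 / (real n+1)^2 \<le> 4" using np by (simp add: divide_le_eq)
  qed auto
  also have "\<dots> = 4 ^ m" by (simp add: m power_mult power_add)
  finally show ?thesis .
qed

lemma binomial_div_2_pow_le: assumes "m \<ge> 1" shows "real (m choose k) / 2 ^ m \<le> 1 / sqrt m"
proof -
  have mp: "real m > 0" using assms by simp
  have "(real (m choose k) / 2 ^ m) ^ 2 \<le> (1 / sqrt m) ^ 2"
  proof -
    have q: "((2::real)^m)^2 = 4^m" by (simp add: power2_eq_square flip: power_mult_distrib)
    have "(real (m choose k) / 2 ^ m) ^ 2 = real (m choose k)^2 / 4^m" by (simp add: power_divide q)
    also have "\<dots> \<le> 1 / m" using binomial_sq_le_4_pow[OF assms, of k] mp by (simp add: field_simps)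
    also have "\<dots> = (1 / sqrt m) ^ 2" using mp by (simp add: power_divide)
    finally show ?thesis .
  qed
  then show ?thesis by (rule power2_le_imp_le) auto
qed

lemma card_progression_in_interval:
  assumes R: "R \<ge> 0"
  shows "real (card {k::nat. k \<le> m \<and> \<bar>c + 2 * real k\<bar> < R}) \<le> R + 1"
proof (cases "{k::nat. k \<le> m \<and> \<bar>c + 2 * real k\<bar> < R} = {}")
  case True show ?thesis unfolding True using R by simp
next
  case False
  let ?K = "{k::nat. k \<le> m \<and> \<bar>c + 2 * real k\<bar> < R}"
  have fin: "finite ?K" by simp
  define k0 where "k0 = Min ?K"
  have k0: "k0 \<in> ?K" using Min_in[OF fin False] k0_def by simp
  have "?K \<subseteq> {k0..k0 + nat \<lfloor>R\<rfloor>}"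
  proof
    fix k assume k: "k \<in> ?K"
    have "k0 \<le> k" using Min_le[OF fin k] k0_def by simp
    have "2 * (real k - real k0) < 2 * R" using k k0 by auto
    then have "real (k - k0) < R" using \<open>k0 \<le> k\<close> by (simp add: of_nat_diff)
    then have "int (k - k0) \<le> \<lfloor>R\<rfloor>" by (simp add: le_floor_iff)
    then show "k \<in> {k0..k0 + nat \<lfloor>R\<rfloor>}" using \<open>k0 \<le> k\<close> by auto
  qed
  then have "card ?K \<le> card {k0..k0 + nat \<lfloor>R\<rfloor>}" by (intro card_mono) auto
  then have "real (card ?K) \<le> real (nat \<lfloor>R\<rfloor> + 1)" by simp
  also have "\<dots> \<le> R + 1" using R by linarith
  finally show ?thesis .
qed

lemma sum_half_powers_le: "(\<Sum>j\<le>J. (1/2::real) ^ j) \<le> 2"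
proof -
  have "(\<Sum>j\<le>J. (1/2::real) ^ j) = 2 - (1/2) ^ J" by (induction J) auto
  then show ?thesis by simp
qed

lemma exists_dyadic_scale: assumes "m \<ge> (1::nat)" shows "\<exists>J::nat. real m \<le> 2 ^ J \<and> real J \<le> 2 * ln m + 1"
proof -
  have mp: "real m > 0" using assms by simp
  have l0: "log 2 (real m) \<ge> 0" using assms by simp
  define J where "J = nat \<lceil>log 2 (real m)\<rceil>"
  have J1: "real J \<ge> log 2 (real m)" unfolding J_def using l0 by linarith
  have J2: "real J \<le> log 2 (real m) + 1" unfolding J_def using l0 by linarith
  have "real m = 2 powr (log 2 (real m))" using mp by simp
  also have "\<dots> \<le> 2 powr (real J)" using J1 by (intro powr_mono) auto
  also have "\<dots> = 2 ^ J" by (simp add: powr_realpow)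
  finally have a: "real m \<le> 2 ^ J" .
  have "log 2 (real m) = ln m / ln 2" by (simp add: log_def)
  also have "\<dots> \<le> ln m / (1/2)" using ln2_ge_two_thirds mp by (intro divide_left_mono) auto
  finally have "log 2 (real m) \<le> 2 * ln m" by simp
  with J2 a show ?thesis by (intro exI[of _ J]) auto
qed

lemma square_sum_le_tail_sums:
  fixes n :: nat
  assumes u: "\<And>i. u i \<ge> (0::real)"
  shows "(\<Sum>i<n. u i)^2 \<le> 2 * (\<Sum>i<n. u i * (\<Sum>j\<in>{i..<n}. u j))"
proof (induction n)
  case 0 then show ?case by simp
next
  case (Suc n)
  define S where "S = (\<Sum>i<n. u i)"
  define R where "R = (\<Sum>i<n. u i * (\<Sum>j\<in>{i..<n}. u j))"
  have R': "(\<Sum>i<Suc n. u i * (\<Sum>j\<in>{i..<Suc n}. u j)) = R + u n * S + u n * u n"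
  proof -
    have "(\<Sum>i<n. u i * (\<Sum>j\<in>{i..<Suc n}. u j)) = (\<Sum>i<n. u i * (\<Sum>j\<in>{i..<n}. u j) + u i * u n)"
      by (intro sum.cong refl) (simp add: algebra_simps)
    also have "\<dots> = R + u n * S" by (simp add: R_def S_def sum.distrib sum_distrib_left algebra_simps)
    finally show ?thesis by simp
  qed
  have "(\<Sum>i<Suc n. u i)^2 = S^2 + 2 * u n * S + u n * u n" by (simp add: S_def power2_eq_square algebra_simps)
  also have "\<dots> \<le> 2 * R + 2 * u n * S + u n * u n" using Suc.IH by (simp add: S_def R_def)
  also have "\<dots> \<le> 2 * (R + u n * S + u n * u n)" using u[of n] by (simp add: algebra_simps)
  finally show ?case unfolding R' .
qed

definition harm_weight :: "nat \<Rightarrow> real" where "harm_weight i = (if i = 0 then 1 else 1 / real i)"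

lemma sum_harm_weight: "(\<Sum>i<Suc N. harm_weight i) = 1 + harm N"
proof (induction N)
  case 0 then show ?case by (simp add: harm_weight_def harm_expand)
next
  case (Suc N)
  then show ?case by (simp add: harm_weight_def harm_Suc divide_inverse del: of_nat_Suc)
qed

lemma sum_harm_weight_le: assumes "n \<ge> 1" shows "(\<Sum>i<n. harm_weight i) \<le> 2 + ln n"
proof -
  obtain N where n: "n = Suc N" using assms by (cases n) auto
  have "(\<Sum>i<n. harm_weight i) = 1 + harm N" unfolding n by (rule sum_harm_weight)
  also have "harm N \<le> (harm n :: real)" unfolding n by (intro harm_mono) simp
  also have "harm n - ln (real n) \<le> harm 1 - ln (real 1)"
    using euler_mascheroni_sequence_decreasing[of 1 n] assms by simp
  then have "harm n \<le> 1 + ln (real n)" by (simp add: harm_expand)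
  finally show ?thesis by simp
qed

section \<open>A pathwise Doob inequality\<close>

fun run_max :: "(nat \<Rightarrow> real) \<Rightarrow> nat \<Rightarrow> real" where
  "run_max y 0 = y 0"
| "run_max y (Suc k) = max (run_max y k) (y (Suc k))"

lemma run_max_cong: "(\<And>j. j \<le> k \<Longrightarrow> y j = y' j) \<Longrightarrow> run_max y k = run_max y' k"
  by (induction k) auto

lemma run_max_ge: "j \<le> k \<Longrightarrow> y j \<le> run_max y k"
proof (induction k)
  case 0 then show ?case by simp
next
  case (Suc k) then show ?case by (cases "j = Suc k") (auto simp: le_Suc_eq max_def)
qed

lemma run_max_nonneg: assumes "\<And>j. y j \<ge> 0" shows "run_max y k \<ge> 0"
proof -
  have "y 0 \<le> run_max y k" by (rule run_max_ge) simp
  moreover have "y 0 \<ge> 0" by (rule assms)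
  ultimately show ?thesis by linarith
qed

lemma run_max_sq_le_aux:
  assumes y: "\<And>j. y j \<ge> 0"
  shows "run_max y n ^ 2 \<le> 2 * run_max y n * y n - 2 * (\<Sum>k<n. run_max y k * (y (Suc k) - y k))"
proof (induction n)
  case 0 then show ?case using y[of 0] by (simp add: power2_eq_square)
next
  case (Suc n)
  define Y where "Y = run_max y n"
  define S where "S = (\<Sum>k<n. run_max y k * (y (Suc k) - y k))"
  define u where "u = y (Suc n)"
  define v where "v = y n"
  have IH: "Y^2 \<le> 2 * Y * v - 2 * S" using Suc.IH by (simp add: Y_def S_def v_def)
  have S': "(\<Sum>k<Suc n. run_max y k * (y (Suc k) - y k)) = S + Y * (u - v)"
    by (simp add: S_def Y_def u_def v_def)
  show ?case
  proof (cases "u \<le> Y")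
    case True
    then have "run_max y (Suc n) = Y" by (simp add: Y_def u_def)
    then show ?thesis unfolding S' using IH by (simp add: u_def algebra_simps power2_eq_square)
  next
    case False
    then have e: "run_max y (Suc n) = u" by (simp add: Y_def u_def)
    have sq: "0 \<le> (u - Y)^2" by simp
    have "u^2 \<le> 2 * u * u - 2 * (S + Y * (u - v))"
      using IH sq by (simp add: power2_eq_square algebra_simps)
    then show ?thesis unfolding S' e by (simp add: u_def)
  qed
qed

text \<open>Taking expectations, the sum has nonnegative mean because \<open>\<bar>M\<bar>\<close> is a submartingale for a
  martingale \<open>M\<close>; this yields Doob's \<open>L\<^sup>2\<close> inequality.\<close>

lemma run_max_sq_le:
  assumes y: "\<And>j. y j \<ge> 0"
  shows "run_max y n ^ 2 \<le> 4 * y n ^ 2 - 4 * (\<Sum>k<n. run_max y k * (y (Suc k) - y k))"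
proof -
  have a: "run_max y n ^ 2 \<le> 2 * run_max y n * y n - 2 * (\<Sum>k<n. run_max y k * (y (Suc k) - y k))"
    by (rule run_max_sq_le_aux[OF y])
  have b: "0 \<le> (run_max y n - 2 * y n)^2" by simp
  from a b show ?thesis by (simp add: power2_eq_square algebra_simps)
qed

section \<open>Averaging over step sequences\<close>

definition steps :: "complex set" where
  "steps = {complex_of_real (sqrt 2), - complex_of_real (sqrt 2),
        \<i> * complex_of_real (sqrt 2), - (\<i> * complex_of_real (sqrt 2))}"

lemma steps_distinct:
  "complex_of_real (sqrt 2) \<noteq> - complex_of_real (sqrt 2)"
  "complex_of_real (sqrt 2) \<noteq> \<i> * complex_of_real (sqrt 2)"
  "complex_of_real (sqrt 2) \<noteq> - (\<i> * complex_of_real (sqrt 2))"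
  "- complex_of_real (sqrt 2) \<noteq> \<i> * complex_of_real (sqrt 2)"
  "- complex_of_real (sqrt 2) \<noteq> - (\<i> * complex_of_real (sqrt 2))"
  "\<i> * complex_of_real (sqrt 2) \<noteq> - (\<i> * complex_of_real (sqrt 2))"
  by (auto simp: complex_eq_iff)

lemma sum_steps: "(\<Sum>x\<in>steps. g x) = g (complex_of_real (sqrt 2)) + g (- complex_of_real (sqrt 2))
   + g (\<i> * complex_of_real (sqrt 2)) + g (- (\<i> * complex_of_real (sqrt 2)))"
  unfolding steps_def using steps_distinct by (simp add: add.assoc)

lemma finite_steps: "finite steps" and card_steps: "card steps = 4" and steps_nonempty: "steps \<noteq> {}"
  unfolding steps_def using steps_distinct by auto

lemma norm_steps: "x \<in> steps \<Longrightarrow> cmod x = sqrt 2"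
  unfolding steps_def by (auto simp: norm_mult)

fun avg :: "nat \<Rightarrow> (complex list \<Rightarrow> real) \<Rightarrow> real" where
  "avg 0 F = F []"
| "avg (Suc n) F = (\<Sum>x\<in>steps. avg n (\<lambda>xs. F (x # xs))) / 4"

lemma finite_set_replicate_step_pmf: "finite (set_pmf (replicate_pmf n step_pmf))"
proof -
  have "set_pmf step_pmf = steps" unfolding step_pmf_def steps_def[symmetric]
    using finite_steps steps_nonempty by simp
  then show ?thesis unfolding set_replicate_pmf
    using finite_lists_length_eq[OF finite_steps, of n] by (simp add: lists_eq_set)
qed

lemma expectation_replicate_step_pmf: "measure_pmf.expectation (replicate_pmf n step_pmf) F = avg n F"
proof (induction n arbitrary: F)
  case 0
  then show ?case by simp
next
  case (Suc n)
  have st: "step_pmf = pmf_of_set steps" unfolding step_pmf_def steps_def ..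
  have "replicate_pmf (Suc n) step_pmf = pmf_of_set steps \<bind> (\<lambda>x. map_pmf (Cons x) (replicate_pmf n step_pmf))"
    by (simp add: st map_pmf_def)
  then have "measure_pmf.expectation (replicate_pmf (Suc n) step_pmf) F
      = (\<Sum>a\<in>steps. measure_pmf.expectation (map_pmf (Cons a) (replicate_pmf n step_pmf)) F /\<^sub>R real (card steps))"
    by (simp only:) (rule pmf_expectation_bind_pmf_of_set[OF steps_nonempty finite_steps], simp add: finite_set_replicate_step_pmf)
  also have "\<dots> = avg (Suc n) F"
    by (simp add: Suc card_steps sum_divide_distrib)
  finally show ?case .
qed

lemma avg_const[simp]: "avg n (\<lambda>_. c) = c"
  by (induction n) (simp_all add: card_steps)

lemma avg_mono: "(\<And>xs. length xs = n \<Longrightarrow> F xs \<le> G xs) \<Longrightarrow> avg n F \<le> avg n G"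
proof (induction n arbitrary: F G)
  case 0 then show ?case by simp
next
  case (Suc n)
  have "(\<Sum>x\<in>steps. avg n (\<lambda>xs. F (x # xs))) \<le> (\<Sum>x\<in>steps. avg n (\<lambda>xs. G (x # xs)))"
    by (intro sum_mono Suc.IH) (simp add: Suc.prems)
  then show ?case by simp
qed

lemma avg_cong: "(\<And>xs. length xs = n \<Longrightarrow> F xs = G xs) \<Longrightarrow> avg n F = avg n G"
  by (intro antisym avg_mono) auto

lemma avg_add: "avg n (\<lambda>xs. F xs + G xs) = avg n F + avg n G"
  by (induction n arbitrary: F G) (simp_all add: sum.distrib add_divide_distrib)

lemma avg_cmult: "avg n (\<lambda>xs. c * F xs) = c * avg n F"
  by (induction n arbitrary: F) (simp_all add: sum_distrib_left)

lemma avg_diff: "avg n (\<lambda>xs. F xs - G xs) = avg n F - avg n G"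
  using avg_add[of n F "\<lambda>xs. - G xs"] avg_cmult[of n "-1" G] by simp

lemma avg_sum: "finite A \<Longrightarrow> avg n (\<lambda>xs. \<Sum>i\<in>A. F i xs) = (\<Sum>i\<in>A. avg n (F i))"
  by (induction A rule: finite_induct) (simp_all add: avg_add)

lemma avg_append: "avg (i + k) F = avg i (\<lambda>us. avg k (\<lambda>vs. F (us @ vs)))"
  by (induction i arbitrary: F) simp_all

lemma avg_take: "k \<le> n \<Longrightarrow> avg n (\<lambda>xs. F (take k xs)) = avg k F"
proof -
  assume "k \<le> n"
  then have "avg n (\<lambda>xs. F (take k xs)) = avg (k + (n - k)) (\<lambda>xs. F (take k xs))" by simp
  also have "\<dots> = avg k F" unfolding avg_append by (rule avg_cong) simp
  finally show ?thesis .
qed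

lemma avg_take_nth: "k < n \<Longrightarrow> avg n (\<lambda>xs. F (take k xs) (xs ! k)) = avg k (\<lambda>us. (\<Sum>x\<in>steps. F us x) / 4)"
proof -
  assume "k < n"
  then obtain m where n: "n = k + Suc m" by (metis add_Suc_right less_imp_Suc_add)
  show ?thesis unfolding n avg_append by (rule avg_cong) (simp add: nth_append)
qed

lemma walk_0[simp]: "walk a xs 0 = a" by (simp add: walk_def)

lemma walk_Suc: "walk a xs (Suc j) = walk a xs j + xs ! j" by (simp add: walk_def)

lemma walk_take: "j \<le> k \<Longrightarrow> walk a (take k xs) j = walk a xs j"
  unfolding walk_def by (intro arg_cong2[where f="(+)"] sum.cong) auto

lemma walk_Cons: "walk a (x # xs) (Suc j) = walk (a + x) xs j"
  unfolding walk_def sum.lessThan_Suc_shift by simp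

lemma walk_append_le: "j \<le> length us \<Longrightarrow> walk a (us @ vs) j = walk a us j"
  unfolding walk_def by (intro arg_cong2[where f="(+)"] sum.cong) (auto simp: nth_append)

lemma walk_append: "length us = i \<Longrightarrow> walk a (us @ vs) (i + j) = walk (walk a us i) vs j"
proof (induction j)
  case 0 then show ?case using walk_append_le[of i us a vs] by simp
next
  case (Suc j) then show ?case by (simp add: walk_Suc nth_append add.assoc)
qed

lemma avg_walk_markov:
  assumes "i \<le> n"
  shows "avg n (\<lambda>xs. f (walk z0 xs i) * (\<Sum>j\<in>{i..<n}. g (walk z0 xs j)))
    = avg i (\<lambda>us. f (walk z0 us i) * avg (n - i) (\<lambda>vs. \<Sum>m<n - i. g (walk (walk z0 us i) vs m)))"
proof -
  have "avg n (\<lambda>xs. f (walk z0 xs i) * (\<Sum>j\<in>{i..<n}. g (walk z0 xs j)))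
      = avg i (\<lambda>us. avg (n - i) (\<lambda>vs. f (walk z0 (us @ vs) i) * (\<Sum>j\<in>{i..<n}. g (walk z0 (us @ vs) j))))"
    using avg_append[of i "n - i"] assms by simp
  also have "\<dots> = avg i (\<lambda>us. avg (n - i) (\<lambda>vs. f (walk z0 us i) * (\<Sum>m<n - i. g (walk (walk z0 us i) vs m))))"
    using assms
    by (intro avg_cong arg_cong2[where f="(*)"])
       (simp_all add: walk_append_le sum.atLeastLessThan_shift_0 atLeast0LessThan walk_append)
  finally show ?thesis by (simp add: avg_cmult)
qed

section \<open>The angle increment\<close>

lemma nonzero_if_not_collinear:
  assumes "\<not> collinear {a, b, 0}"
  shows "a \<noteq> 0" "b \<noteq> 0"
  using assms by (metis collinear_2 insert_absorb2 insert_commute)+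

lemma Arg_div_ne_pi_if_not_collinear:
  assumes nc: "\<not> collinear {a, b, 0}"
  shows "Arg (b / a) \<noteq> pi"
proof
  assume "Arg (b / a) = pi"
  then have "b / a \<in> \<real>" using Arg_eq_pi_iff by blast
  then obtain c where "b / a = of_real c" by (auto elim: Reals_cases)
  then have "b = c *\<^sub>R a"
    using nonzero_if_not_collinear(1)[OF nc] by (simp add: field_simps scaleR_conv_of_real)
  then have "collinear {0, a, b}" using collinear_lemma by blast
  then show False using nc by (simp add: insert_commute)
qed

lemma phi_Arg:
  assumes nc: "\<not> collinear {a, b, 0}"
  shows "phi a b = Arg (b / a)"
proof -
  have a0: "a \<noteq> 0" and b0: "b \<noteq> 0" using nonzero_if_not_collinear[OF nc] .
  define u where "u = b / a"
  have u0: "u \<noteq> 0" using a0 b0 by (simp add: u_def)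
  let ?P = "\<lambda>t. - pi < t \<and> t < pi \<and>
      (a / complex_of_real (cmod a)) * exp (\<i> * complex_of_real t) = b / complex_of_real (cmod b)"
  have "?P (Arg u)"
  proof (intro conjI)
    show "- pi < Arg u" using Arg_bounded by blast
    show "Arg u < pi"
      using Arg_bounded[of u] Arg_div_ne_pi_if_not_collinear[OF nc] by (simp add: u_def less_le)
    have e: "exp (\<i> * complex_of_real (Arg u)) = u / of_real (cmod u)"
      using Arg_eq[OF u0] u0 by (simp add: field_simps)
    show "(a / complex_of_real (cmod a)) * exp (\<i> * complex_of_real (Arg u)) = b / complex_of_real (cmod b)"
      unfolding e using a0 b0 by (simp add: u_def norm_divide field_simps)
  qed
  moreover have "t = Arg u" if "?P t" for t
  proof -
    have "of_real (cmod b / cmod a) * exp (\<i> * complex_of_real t) = u"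
      using that a0 b0 by (simp add: u_def field_simps)
    from Arg_unique[OF this] that a0 b0 show ?thesis by simp
  qed
  ultimately have "(THE t. ?P t) = Arg u" by (intro the_equality) blast+
  then show ?thesis using nc by (simp add: phi_def u_def)
qed

lemma abs_phi_le_pi: "\<bar>phi a b\<bar> \<le> pi"
proof (cases "collinear {a, b, 0}")
  case True then show ?thesis by (simp add: phi_def)
next
  case False then show ?thesis using phi_Arg[OF False] Arg_bounded[of "b/a"] by auto
qed

lemma phi_Ln:
  assumes a0: "a \<noteq> 0" and x: "cmod x \<le> cmod a / 2"
  shows "phi a (a + x) = Im (Ln (1 + x / a))"
proof -
  have w: "cmod (x / a) \<le> 1/2" using x a0 by (simp add: norm_divide field_simps)
  have re: "Re (1 + x / a) > 0" using abs_Re_le_cmod[of "x/a"] w by simp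
  show ?thesis
  proof (cases "collinear {a, a + x, 0}")
    case True
    then have "collinear {0, a, a + x}" by (simp add: insert_commute)
    then obtain c where "a + x = c *\<^sub>R a \<or> a + x = 0" using collinear_lemma a0 by blast
    moreover have "a + x \<noteq> 0"
    proof
      assume "a + x = 0"
      then have "x = - a" by (simp add: add_eq_0_iff2)
      then show False using x a0 by simp
    qed
    ultimately have c: "1 + x / a = of_real c" using a0 by (auto simp: field_simps scaleR_conv_of_real)
    then have "c > 0" using re by simp
    then have "Im (Ln (1 + x / a)) = 0" unfolding c by (simp add: Ln_of_real)
    then show ?thesis using True by (simp add: phi_def)
  next
    case False
    have "(a + x) / a = 1 + x / a" using a0 by (simp add: field_simps)
    moreover have "1 + x / a \<noteq> 0"
    proof
      assume "1 + x / a = 0"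
      then have "Re (1 + x / a) = 0" by simp
      with re show False by simp
    qed
    ultimately show ?thesis using phi_Arg[OF False] Arg_eq_Im_Ln by simp
  qed
qed

definition drift :: "complex \<Rightarrow> real" where "drift a = (\<Sum>x\<in>steps. phi a (a + x)) / 4"

definition decay :: "nat \<Rightarrow> complex \<Rightarrow> real" where
  "decay s z = (if cmod z \<le> 1 then 1 else 1 / cmod z ^ s)"

lemma sum_steps_Im_div: "(\<Sum>x\<in>steps. Im (x / a)) = 0" "(\<Sum>x\<in>steps. Im ((x / a)^2 / 2)) = 0"
  unfolding sum_steps by (simp add: Im_divide) (simp add: power_divide power_mult_distrib)

text \<open>The steps sum to \<open>0\<close> and so do their squares, so the linear and quadratic terms of
  \<open>Im (Ln (1 + x / a))\<close> cancel in the average over the steps; only the cubic remainder survives.\<close>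

lemma abs_drift_le_far:
  assumes a: "cmod a \<ge> 2 * sqrt 2"
  shows "\<bar>drift a\<bar> \<le> 6 / cmod a ^ 3"
proof -
  define R where "R w = Ln (1 + w) - w + w^2/2" for w
  have a0: "a \<noteq> 0" using a by auto
  have apos: "cmod a > 0" using a0 by simp
  have xa: "cmod x \<le> cmod a / 2" if "x \<in> steps" for x using norm_steps[OF that] a by simp
  have ph: "phi a (a + x) = Im (x / a) - Im ((x / a)^2 / 2) + Im (R (x / a))" if "x \<in> steps" for x
    using phi_Ln[OF a0 xa[OF that]] by (simp add: R_def)
  have rb: "\<bar>Im (R (x / a))\<bar> \<le> 2 * (sqrt 2 / cmod a) ^ 3" if "x \<in> steps" for x
  proof -
    have w: "cmod (x / a) \<le> 1/2" using xa[OF that] apos by (simp add: norm_divide field_simps)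
    have "\<bar>Im (R (x / a))\<bar> \<le> cmod (R (x / a))" by (rule abs_Im_le_cmod)
    also have "\<dots> \<le> 2 * cmod (x / a) ^ 3" unfolding R_def by (rule norm_Ln_1_plus_remainder_le[OF w])
    also have "cmod (x / a) = sqrt 2 / cmod a" using norm_steps[OF that] by (simp add: norm_divide)
    finally show ?thesis .
  qed
  have "(\<Sum>x\<in>steps. phi a (a + x)) = (\<Sum>x\<in>steps. Im (x / a)) - (\<Sum>x\<in>steps. Im ((x / a)^2 / 2)) + (\<Sum>x\<in>steps. Im (R (x / a)))"
    by (simp add: ph sum.distrib sum_subtractf cong: sum.cong)
  also have "\<dots> = (\<Sum>x\<in>steps. Im (R (x / a)))" unfolding sum_steps_Im_div by simp
  finally have e: "(\<Sum>x\<in>steps. phi a (a + x)) = (\<Sum>x\<in>steps. Im (R (x / a)))" .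
  have "\<bar>\<Sum>x\<in>steps. Im (R (x / a))\<bar> \<le> (\<Sum>x\<in>steps. 2 * (sqrt 2 / cmod a) ^ 3)"
    by (rule order_trans[OF sum_abs sum_mono]) (rule rb)
  also have "\<dots> = 8 * (sqrt 2 / cmod a) ^ 3" by (simp add: card_steps)
  also have "\<dots> = 16 * sqrt 2 / cmod a ^ 3" by (simp add: power_divide power3_eq_cube)
  finally have "\<bar>drift a\<bar> \<le> 4 * sqrt 2 / cmod a ^ 3" by (simp add: drift_def e)
  also have "\<dots> \<le> 6 / cmod a ^ 3"
    using apos sqrt2_bounds by (intro divide_right_mono) auto
  finally show ?thesis .
qed

lemma abs_drift_le_decay: "\<bar>drift a\<bar> \<le> 100 * decay 3 a"
proof -
  have pb: "\<bar>drift a\<bar> \<le> pi"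
  proof -
    have "\<bar>\<Sum>x\<in>steps. phi a (a + x)\<bar> \<le> (\<Sum>x\<in>steps. pi)"
      by (rule order_trans[OF sum_abs sum_mono]) (rule abs_phi_le_pi)
    then show ?thesis by (simp add: drift_def card_steps)
  qed
  consider "cmod a \<le> 1" | "1 < cmod a" "cmod a < 2 * sqrt 2" | "cmod a \<ge> 2 * sqrt 2" by linarith
  then show ?thesis
  proof cases
    case 1
    then have "decay 3 a = 1" by (simp add: decay_def)
    then show ?thesis using pb pi_less_4 by linarith
  next
    case 2
    have "cmod a ^ 3 \<le> (2 * sqrt 2) ^ 3" using 2 by (intro power_mono) auto
    also have "\<dots> \<le> 3 ^ 3" using sqrt2_bounds by (intro power_mono) auto
    finally have c: "cmod a ^ 3 \<le> 27" by simp
    have cp: "cmod a ^ 3 > 0" using 2 by (intro zero_less_power) linarith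
    have "pi * cmod a ^ 3 \<le> 3.15 * 27" by (intro mult_mono pi_le_3_15 c) auto
    then have "pi \<le> 100 / cmod a ^ 3" using cp by (simp add: le_divide_eq)
    moreover have "100 * decay 3 a = 100 / cmod a ^ 3" using 2 by (simp add: decay_def)
    ultimately show ?thesis using pb by linarith
  next
    case 3
    then have "cmod a > 1" using sqrt2_bounds by linarith
    then have "6 / cmod a ^ 3 \<le> 100 / cmod a ^ 3" by (intro divide_right_mono) auto
    moreover have "100 * decay 3 a = 100 / cmod a ^ 3" using \<open>cmod a > 1\<close> by (simp add: decay_def)
    ultimately show ?thesis using abs_drift_le_far[OF 3] by linarith
  qed
qed

lemma phi_step_sq_le_far:
  assumes a: "cmod a \<ge> 2 * sqrt 2" and x: "x \<in> steps"
  shows "(phi a (a + x))^2 \<le> 8 / cmod a ^ 2"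
proof -
  have a0: "a \<noteq> 0" using a by auto
  have xa: "cmod x \<le> cmod a / 2" using norm_steps[OF x] a by simp
  have w: "cmod (x / a) \<le> 1/2" using xa a0 by (simp add: norm_divide field_simps)
  have "\<bar>phi a (a + x)\<bar> \<le> cmod (Ln (1 + x / a))"
    unfolding phi_Ln[OF a0 xa] by (rule abs_Im_le_cmod)
  also have "\<dots> \<le> 2 * cmod (x / a)" by (rule norm_Ln_1_plus_le[OF w])
  also have "\<dots> = 2 * sqrt 2 / cmod a" using norm_steps[OF x] by (simp add: norm_divide)
  finally have "(phi a (a + x))^2 \<le> (2 * sqrt 2 / cmod a)^2" by (rule square_le_of_abs_le)
  also have "\<dots> = 8 / cmod a ^ 2" by (simp add: power_divide power_mult_distrib)
  finally show ?thesis .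
qed

lemma mean_sq_phi_le_decay: "(\<Sum>x\<in>steps. (phi a (a + x))^2) / 4 \<le> 100 * decay 2 a"
proof -
  have pb: "(\<Sum>x\<in>steps. (phi a (a + x))^2) / 4 \<le> pi^2"
  proof -
    have "(\<Sum>x\<in>steps. (phi a (a + x))^2) \<le> (\<Sum>x\<in>steps. pi^2)"
      by (intro sum_mono square_le_of_abs_le) (auto simp: abs_phi_le_pi)
    then show ?thesis by (simp add: card_steps)
  qed
  have "pi * pi \<le> 3.15 * 3.15" by (intro mult_mono pi_le_3_15) (use pi_gt3 in auto)
  then have pi2: "pi^2 \<le> 10" by (simp add: power2_eq_square)
  consider "cmod a \<le> 1" | "1 < cmod a" "cmod a < 2 * sqrt 2" | "cmod a \<ge> 2 * sqrt 2" by linarith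
  then show ?thesis
  proof cases
    case 1
    then have "decay 2 a = 1" by (simp add: decay_def)
    then show ?thesis using pb pi2 by linarith
  next
    case 2
    have "cmod a ^ 2 \<le> (2 * sqrt 2) ^ 2" using 2 by (intro power_mono) auto
    moreover have "(2 * sqrt 2) ^ 2 = (8::real)" by (simp add: power_mult_distrib)
    ultimately have c: "cmod a ^ 2 \<le> 8" by linarith
    have cp: "cmod a ^ 2 > 0" using 2 by (intro zero_less_power) linarith
    have "10 * cmod a ^ 2 \<le> 100" using c by linarith
    then have "10 \<le> 100 / cmod a ^ 2" using cp by (simp add: le_divide_eq)
    moreover have "100 * decay 2 a = 100 / cmod a ^ 2" using 2 by (simp add: decay_def)
    ultimately show ?thesis using pb pi2 by linarith
  next
    case 3
    have "(\<Sum>x\<in>steps. (phi a (a + x))^2) \<le> (\<Sum>x\<in>steps. 8 / cmod a ^ 2)"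
      by (intro sum_mono phi_step_sq_le_far 3)
    then have "(\<Sum>x\<in>steps. (phi a (a + x))^2) / 4 \<le> 8 / cmod a ^ 2" by (simp add: card_steps)
    moreover have "cmod a > 1" using 3 sqrt2_bounds by linarith
    moreover have "8 / cmod a ^ 2 \<le> 100 / cmod a ^ 2" by (intro divide_right_mono) auto
    moreover have "100 * decay 2 a = 100 / cmod a ^ 2" using \<open>cmod a > 1\<close> by (simp add: decay_def)
    ultimately show ?thesis by linarith
  qed
qed

section \<open>Decay along the walk\<close>

text \<open>\<open>srw_mean m f p\<close> is the expectation of \<open>f (p + T m)\<close> for a simple \<open>\<plusminus>1\<close> random walk \<open>T\<close>.\<close>

fun srw_mean :: "nat \<Rightarrow> (real \<Rightarrow> real) \<Rightarrow> real \<Rightarrow> real" where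
  "srw_mean 0 f p = f p"
| "srw_mean (Suc m) f p = (srw_mean m f (p + 1) + srw_mean m f (p - 1)) / 2"

lemma sum_binomial_Suc:
  "(\<Sum>k\<le>Suc m. real (Suc m choose k) * F k) = (\<Sum>k\<le>m. real (m choose k) * (F k + F (Suc k)))"
proof -
  have "(\<Sum>k\<le>Suc m. real (Suc m choose k) * F k) = F 0 + (\<Sum>k\<le>m. real (Suc m choose Suc k) * F (Suc k))"
    by (subst sum.atMost_Suc_shift) simp
  also have "\<dots> = F 0 + (\<Sum>k\<le>m. real (m choose k) * F (Suc k)) + (\<Sum>k\<le>m. real (m choose Suc k) * F (Suc k))"
    by (simp add: sum.distrib algebra_simps)
  also have "(\<Sum>k\<le>m. real (m choose Suc k) * F (Suc k)) = (\<Sum>k\<le>Suc m. real (m choose k) * F k) - F 0"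
    using sum.atMost_Suc_shift[of "\<lambda>k. real (m choose k) * F k" m] by simp
  also have "(\<Sum>k\<le>Suc m. real (m choose k) * F k) = (\<Sum>k\<le>m. real (m choose k) * F k)"
    by simp
  finally show ?thesis by (simp add: sum.distrib algebra_simps)
qed

lemma srw_mean_closed_form: "srw_mean m f p = (\<Sum>k\<le>m. real (m choose k) * f (p + 2 * real k - real m)) / 2 ^ m"
proof (induction m arbitrary: p)
  case 0 then show ?case by simp
next
  case (Suc m)
  define F where "F k = f (p + 2 * real k - real (Suc m))" for k
  have a: "f (p + 1 + 2 * real k - real m) = F (Suc k)" for k by (simp add: F_def algebra_simps)
  have b: "f (p - 1 + 2 * real k - real m) = F k" for k by (simp add: F_def algebra_simps)
  have "srw_mean (Suc m) f p = (\<Sum>k\<le>m. real (m choose k) * (F k + F (Suc k))) / 2 ^ Suc m"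
  proof -
    have "srw_mean (Suc m) f p = ((\<Sum>k\<le>m. real (m choose k) * f (p + 1 + 2 * real k - real m)) / 2 ^ m
       + (\<Sum>k\<le>m. real (m choose k) * f (p - 1 + 2 * real k - real m)) / 2 ^ m) / 2"
      by (simp add: Suc)
    also have "\<dots> = ((\<Sum>k\<le>m. real (m choose k) * F (Suc k)) + (\<Sum>k\<le>m. real (m choose k) * F k)) / 2 ^ Suc m"
      by (simp only: a b) (simp add: field_simps)
    also have "\<dots> = (\<Sum>k\<le>m. real (m choose k) * (F k + F (Suc k))) / 2 ^ Suc m"
      by (simp add: sum.distrib algebra_simps)
    finally show ?thesis .
  qed
  also have "\<dots> = (\<Sum>k\<le>Suc m. real (Suc m choose k) * F k) / 2 ^ Suc m"
    by (simp only: sum_binomial_Suc)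
  finally show ?case unfolding F_def .
qed

definition band :: "real \<Rightarrow> real \<Rightarrow> real" where "band R t = (if \<bar>t\<bar> < R then 1 else 0)"

lemma srw_mean_band_le: assumes "m \<ge> 1" "R \<ge> 0" shows "srw_mean m (band R) p \<le> (R + 1) / sqrt m"
proof -
  let ?K = "{k::nat. k \<le> m \<and> \<bar>(p - real m) + 2 * real k\<bar> < R}"
  have "srw_mean m (band R) p = (\<Sum>k\<le>m. real (m choose k) / 2 ^ m * band R (p + 2 * real k - real m))"
    by (simp add: srw_mean_closed_form sum_divide_distrib)
  also have "\<dots> \<le> (\<Sum>k\<le>m. 1 / sqrt m * band R (p + 2 * real k - real m))"
    by (intro sum_mono mult_right_mono binomial_div_2_pow_le[OF assms(1)]) (simp add: band_def)
  also have "\<dots> = 1 / sqrt m * (\<Sum>k\<le>m. band R (p + 2 * real k - real m))"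
    by (simp add: sum_distrib_left)
  also have "(\<Sum>k\<le>m. band R (p + 2 * real k - real m)) = real (card ?K)"
  proof -
    have "(\<Sum>k\<le>m. band R (p + 2 * real k - real m)) = (\<Sum>k\<in>?K. 1)"
      unfolding band_def by (subst sum.If_cases) (auto simp: algebra_simps intro!: sum.cong arg_cong[where f=card])
    then show ?thesis by simp
  qed
  also have "1 / sqrt m * real (card ?K) \<le> 1 / sqrt m * (R + 1)"
    by (intro mult_left_mono card_progression_in_interval assms) simp
  finally show ?thesis by simp
qed

lemma srw_mean_nonneg: "(\<And>t. f t \<ge> 0) \<Longrightarrow> srw_mean m f p \<ge> 0"
  by (induction m arbitrary: p) auto

text \<open>Every step changes both \<open>diag_p\<close> and \<open>diag_q\<close> by \<open>\<plusminus>1\<close>, and the four steps realise the four sign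
  combinations, so the two diagonal coordinates of the walk are independent simple random walks.\<close>

definition diag_p :: "complex \<Rightarrow> real" where "diag_p z = (Re z + Im z) / sqrt 2"

definition diag_q :: "complex \<Rightarrow> real" where "diag_q z = (Re z - Im z) / sqrt 2"

lemma diag_p_add: "diag_p (a + b) = diag_p a + diag_p b" and diag_q_add: "diag_q (a + b) = diag_q a + diag_q b"
  by (simp_all add: diag_p_def diag_q_def add_divide_distrib[symmetric] algebra_simps)

lemma diag_steps:
  "diag_p (complex_of_real (sqrt 2)) = 1" "diag_q (complex_of_real (sqrt 2)) = 1"
  "diag_p (- complex_of_real (sqrt 2)) = -1" "diag_q (- complex_of_real (sqrt 2)) = -1"
  "diag_p (\<i> * complex_of_real (sqrt 2)) = 1" "diag_q (\<i> * complex_of_real (sqrt 2)) = -1"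
  "diag_p (- (\<i> * complex_of_real (sqrt 2))) = -1" "diag_q (- (\<i> * complex_of_real (sqrt 2))) = 1"
  by (simp_all add: diag_p_def diag_q_def)

lemma norm_sq_eq_diag: "cmod z ^ 2 = diag_p z ^ 2 + diag_q z ^ 2"
  unfolding cmod_power2 diag_p_def diag_q_def power_divide by (simp add: power2_eq_square field_simps)

lemma abs_diag_p_le: "\<bar>diag_p z\<bar> \<le> cmod z" and abs_diag_q_le: "\<bar>diag_q z\<bar> \<le> cmod z"
proof -
  have "diag_p z ^ 2 \<le> cmod z ^ 2" "diag_q z ^ 2 \<le> cmod z ^ 2" using norm_sq_eq_diag[of z] by auto
  then show "\<bar>diag_p z\<bar> \<le> cmod z" "\<bar>diag_q z\<bar> \<le> cmod z"
    using abs_le_square_iff[of "diag_p z" "cmod z"] abs_le_square_iff[of "diag_q z" "cmod z"] by auto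
qed

lemma avg_diag_walk_product:
  "avg m (\<lambda>vs. f (diag_p (walk b vs m)) * g (diag_q (walk b vs m))) = srw_mean m f (diag_p b) * srw_mean m g (diag_q b)"
proof (induction m arbitrary: b)
  case 0 then show ?case by simp
next
  case (Suc m)
  have "avg (Suc m) (\<lambda>vs. f (diag_p (walk b vs (Suc m))) * g (diag_q (walk b vs (Suc m))))
      = (\<Sum>x\<in>steps. srw_mean m f (diag_p b + diag_p x) * srw_mean m g (diag_q b + diag_q x)) / 4"
    by (simp add: walk_Cons Suc diag_p_add diag_q_add)
  also have "\<dots> = srw_mean (Suc m) f (diag_p b) * srw_mean (Suc m) g (diag_q b)"
    unfolding sum_steps diag_steps by (simp add: field_simps)
  finally show ?case .
qed

lemma decay_le_1: "decay s z \<le> 1"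
proof (cases "cmod z \<le> 1")
  case False
  then have "1 \<le> cmod z ^ s" by (intro one_le_power) simp
  then have "1 / cmod z ^ s \<le> 1" by simp
  then show ?thesis using False by (simp add: decay_def)
qed (simp add: decay_def)

lemma decay_nonneg: "decay s z \<ge> 0" by (simp add: decay_def)

lemma decay_le_far: assumes "cmod z \<ge> 2 ^ j" "j \<ge> 1" shows "decay s z \<le> 1 / 2 ^ (s * j)"
proof -
  have "(2::real) ^ j \<ge> 2" using assms(2) by (metis power_increasing power_one_right one_le_numeral)
  then have z: "cmod z > 1" using assms(1) by linarith
  have "(2::real) ^ (s * j) = (2 ^ j) ^ s" by (simp add: power_mult mult.commute)
  also have "\<dots> \<le> cmod z ^ s" using assms(1) by (intro power_mono) auto
  finally have "(2::real) ^ (s * j) \<le> cmod z ^ s" .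
  then have "1 / cmod z ^ s \<le> 1 / 2 ^ (s * j)" using z by (intro divide_left_mono mult_pos_pos zero_less_power) auto
  then show ?thesis using z by (simp add: decay_def)
qed

definition dyadic_term :: "nat \<Rightarrow> nat \<Rightarrow> complex \<Rightarrow> real" where
  "dyadic_term s j z = 1 / 2 ^ (s * j) * (band (2 ^ (j + 1)) (diag_p z) * band (2 ^ (j + 1)) (diag_q z))"

lemma dyadic_term_nonneg: "dyadic_term s j z \<ge> 0" by (simp add: dyadic_term_def band_def)

lemma far_if_outside_box: assumes "band (2 ^ (j + 1)) (diag_p z) * band (2 ^ (j + 1)) (diag_q z) \<noteq> 1"
  shows "cmod z \<ge> 2 ^ (j + 1)"
  using assms abs_diag_p_le[of z] abs_diag_q_le[of z] by (auto simp: band_def split: if_splits)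

lemma decay_le_dyadic_sum: "decay s z \<le> (\<Sum>j\<le>J. dyadic_term s j z) + 1 / 2 ^ (s * (J + 1))"
proof (induction J)
  case 0
  show ?case
  proof (cases "band (2 ^ (0 + 1)) (diag_p z) * band (2 ^ (0 + 1)) (diag_q z) = 1")
    case True
    then have "(\<Sum>j\<le>0. dyadic_term s j z) = 1" by (simp add: dyadic_term_def)
    moreover have "(0::real) \<le> 1 / 2 ^ (s * (0 + 1))" by simp
    ultimately show ?thesis using decay_le_1[of s z] by linarith
  next
    case False
    from decay_le_far[OF far_if_outside_box[OF False]] have "decay s z \<le> 1 / 2 ^ (s * (0 + 1))" by simp
    then show ?thesis using dyadic_term_nonneg[of s 0 z] by simp
  qed
next
  case (Suc J)
  show ?case
  proof (cases "band (2 ^ (Suc J + 1)) (diag_p z) * band (2 ^ (Suc J + 1)) (diag_q z) = 1")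
    case True
    then have c: "dyadic_term s (Suc J) z = 1 / 2 ^ (s * (J + 1))" by (simp add: dyadic_term_def)
    have "(0::real) \<le> 1 / 2 ^ (s * (Suc J + 1))" by simp
    moreover have "(\<Sum>j\<le>Suc J. dyadic_term s j z) = (\<Sum>j\<le>J. dyadic_term s j z) + dyadic_term s (Suc J) z" by simp
    ultimately show ?thesis using Suc.IH c by linarith
  next
    case False
    from decay_le_far[OF far_if_outside_box[OF False]] have "decay s z \<le> 1 / 2 ^ (s * (Suc J + 1))" by simp
    moreover have "(\<Sum>j\<le>Suc J. dyadic_term s j z) \<ge> 0" by (intro sum_nonneg dyadic_term_nonneg)
    ultimately show ?thesis by linarith
  qed
qed

lemma avg_dyadic_term_walk_le: assumes "m \<ge> 1"
  shows "avg m (\<lambda>vs. dyadic_term s j (walk b vs m)) \<le> 16 * (4 ^ j / 2 ^ (s * j)) / m"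
proof -
  let ?R = "(2::real) ^ (j + 1)"
  have "avg m (\<lambda>vs. dyadic_term s j (walk b vs m)) = 1 / 2 ^ (s * j) * (srw_mean m (band ?R) (diag_p b) * srw_mean m (band ?R) (diag_q b))"
    unfolding dyadic_term_def avg_cmult avg_diag_walk_product ..
  also have "\<dots> \<le> 1 / 2 ^ (s * j) * (((?R + 1) / sqrt m) * ((?R + 1) / sqrt m))"
    by (intro mult_left_mono mult_mono srw_mean_band_le assms srw_mean_nonneg) (auto simp: band_def)
  also have "((?R + 1) / sqrt m) * ((?R + 1) / sqrt m) = (?R + 1)^2 / m"
    using assms by (simp add: power2_eq_square)
  also have "(?R + 1)^2 \<le> 16 * 4 ^ j"
  proof -
    have o: "(1::real) \<le> 2 ^ j" by (rule one_le_power) simp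
    have "?R = 2 * 2 ^ j" by simp
    then have "?R + 1 \<le> 4 * 2 ^ j" using o by linarith
    then have "(?R + 1)^2 \<le> (4 * 2 ^ j)^2" by (intro power_mono) auto
    also have "\<dots> = 16 * 4 ^ j" by (simp add: power_mult_distrib power2_eq_square flip: power_mult_distrib)
    finally show ?thesis .
  qed
  then have "1 / 2 ^ (s * j) * ((?R + 1)^2 / m) \<le> 1 / 2 ^ (s * j) * (16 * 4 ^ j / m)"
    by (intro mult_left_mono divide_right_mono) auto
  finally show ?thesis by simp
qed

lemma avg_decay_walk_le_dyadic: "avg m (\<lambda>vs. decay s (walk b vs m))
   \<le> (\<Sum>j\<le>J. avg m (\<lambda>vs. dyadic_term s j (walk b vs m))) + 1 / 2 ^ (s * (J + 1))"
proof -
  have "avg m (\<lambda>vs. decay s (walk b vs m)) \<le> avg m (\<lambda>vs. (\<Sum>j\<le>J. dyadic_term s j (walk b vs m)) + 1 / 2 ^ (s * (J + 1)))"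
    by (intro avg_mono decay_le_dyadic_sum)
  also have "\<dots> = (\<Sum>j\<le>J. avg m (\<lambda>vs. dyadic_term s j (walk b vs m))) + 1 / 2 ^ (s * (J + 1))"
    by (simp add: avg_add avg_sum)
  finally show ?thesis .
qed

lemma avg_decay2_walk_le: assumes "m \<ge> 1" shows "avg m (\<lambda>vs. decay 2 (walk b vs m)) \<le> 40 * (1 + ln m) / m"
proof -
  obtain J where J: "real m \<le> 2 ^ J" "real J \<le> 2 * ln m + 1" using exists_dyadic_scale[OF assms] by blast
  have mp: "real m > 0" using assms by simp
  have "avg m (\<lambda>vs. decay 2 (walk b vs m)) \<le> (\<Sum>j\<le>J. avg m (\<lambda>vs. dyadic_term 2 j (walk b vs m))) + 1 / 2 ^ (2 * (J + 1))"
    by (rule avg_decay_walk_le_dyadic)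
  also have "\<dots> \<le> (\<Sum>j\<le>J. 16 * (4 ^ j / 2 ^ (2 * j)) / m) + 1 / 2 ^ J"
  proof (intro add_mono sum_mono avg_dyadic_term_walk_le assms)
    have "(2::real) ^ J \<le> 2 ^ (2 * (J + 1))" by (intro power_increasing) auto
    then show "1 / 2 ^ (2 * (J + 1)) \<le> 1 / (2::real) ^ J" by (intro divide_left_mono) auto
  qed
  also have "(\<Sum>j\<le>J. 16 * (4 ^ j / 2 ^ (2 * j)) / real m) = 16 * (J + 1) / m"
    by (simp add: power_mult)
  also have "1 / (2::real) ^ J \<le> 1 / m" using J(1) mp by (intro divide_left_mono) auto
  finally have "avg m (\<lambda>vs. decay 2 (walk b vs m)) \<le> 16 * (real J + 1) / m + 1 / m" by (simp add: algebra_simps)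
  also have "\<dots> = (16 * (real J + 1) + 1) / m" by (simp add: add_divide_distrib)
  also have "\<dots> \<le> 40 * (1 + ln m) / m"
    using J(2) ln_ge_zero[of "real m"] assms by (intro divide_right_mono) auto
  finally show ?thesis .
qed

lemma avg_decay3_walk_le: assumes "m \<ge> 1" shows "avg m (\<lambda>vs. decay 3 (walk b vs m)) \<le> 33 / m"
proof -
  obtain J where J: "real m \<le> 2 ^ J" "real J \<le> 2 * ln m + 1" using exists_dyadic_scale[OF assms] by blast
  have mp: "real m > 0" using assms by simp
  have "avg m (\<lambda>vs. decay 3 (walk b vs m)) \<le> (\<Sum>j\<le>J. avg m (\<lambda>vs. dyadic_term 3 j (walk b vs m))) + 1 / 2 ^ (3 * (J + 1))"
    by (rule avg_decay_walk_le_dyadic)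
  also have "\<dots> \<le> (\<Sum>j\<le>J. 16 * (4 ^ j / 2 ^ (3 * j)) / m) + 1 / 2 ^ J"
  proof (intro add_mono sum_mono avg_dyadic_term_walk_le assms)
    have "(2::real) ^ J \<le> 2 ^ (3 * (J + 1))" by (intro power_increasing) auto
    then show "1 / 2 ^ (3 * (J + 1)) \<le> 1 / (2::real) ^ J" by (intro divide_left_mono) auto
  qed
  also have "(\<Sum>j\<le>J. 16 * (4 ^ j / 2 ^ (3 * j)) / real m) = 16 / m * (\<Sum>j\<le>J. (1/2) ^ j)"
  proof -
    have "(4::real) ^ j / 2 ^ (3 * j) = (1/2) ^ j" for j
      by (simp add: power_mult flip: power_divide)
    then show ?thesis by (simp add: sum_distrib_left)
  qed
  also have "\<dots> \<le> 16 / m * 2" using sum_half_powers_le mp by (intro mult_left_mono) auto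
  also have "1 / (2::real) ^ J \<le> 1 / m" using J(1) mp by (intro divide_left_mono) auto
  finally show ?thesis by simp
qed

definition decay2_bound :: "nat \<Rightarrow> real" where "decay2_bound m = (if m = 0 then 1 else 40 * (1 + ln m) / m)"

definition decay3_bound :: "nat \<Rightarrow> real" where "decay3_bound m = (if m = 0 then 1 else 33 / m)"

lemma avg_decay2_walk_le_bound: "avg m (\<lambda>vs. decay 2 (walk b vs m)) \<le> decay2_bound m"
  using avg_decay2_walk_le[of m b] decay_le_1[of 2 b] by (cases "m = 0") (auto simp: decay2_bound_def)

lemma avg_decay3_walk_le_bound: "avg m (\<lambda>vs. decay 3 (walk b vs m)) \<le> decay3_bound m"
  using avg_decay3_walk_le[of m b] decay_le_1[of 3 b] by (cases "m = 0") (auto simp: decay3_bound_def)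

lemma decay3_bound_nonneg: "decay3_bound m \<ge> 0" by (simp add: decay3_bound_def)

lemma decay2_bound_le: fixes i n :: nat assumes "i < n" shows "decay2_bound i \<le> 40 * (1 + ln n) * harm_weight i"
proof (cases "i = 0")
  case True
  have "ln (real n) \<ge> 0" using assms by simp
  then show ?thesis using True by (simp add: decay2_bound_def harm_weight_def)
next
  case False
  then have "ln (real i) \<le> ln (real n)" using assms by simp
  then have "40 * (1 + ln i) / i \<le> 40 * (1 + ln n) / i" using False by (intro divide_right_mono) auto
  then show ?thesis using False by (simp add: decay2_bound_def harm_weight_def)
qed

lemma decay3_bound_le: "decay3_bound i \<le> 33 * harm_weight i" by (simp add: decay3_bound_def harm_weight_def)

lemma sum_decay2_bound_le:
  assumes "n \<ge> 2"
  shows "(\<Sum>i<n. decay2_bound i) \<le> 400 * ln (real n) ^ 2"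
proof -
  define L where "L = ln (real n)"
  have L: "L \<ge> 2/3" using ln_ge_two_thirds[OF assms] by (simp add: L_def)
  have "(\<Sum>i<n. decay2_bound i) \<le> (\<Sum>i<n. 40 * (1 + L) * harm_weight i)"
    unfolding L_def by (intro sum_mono decay2_bound_le) simp
  also have "\<dots> = 40 * (1 + L) * (\<Sum>i<n. harm_weight i)" by (simp add: sum_distrib_left)
  also have "\<dots> \<le> 40 * (1 + L) * (2 + L)"
    using sum_harm_weight_le[of n] assms L by (intro mult_left_mono) (auto simp: L_def)
  also have "\<dots> \<le> 40 * (5/2 * L) * (4 * L)" using L by (intro mult_mono) auto
  finally show ?thesis by (simp add: L_def power2_eq_square)
qed

lemma sum_decay3_bound_le:
  assumes "n \<ge> 2"
  shows "(\<Sum>i<n. decay3_bound i) \<le> 132 * ln (real n)"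
proof -
  have L: "ln (real n) \<ge> 2/3" using ln_ge_two_thirds[OF assms] .
  have "(\<Sum>i<n. decay3_bound i) \<le> (\<Sum>i<n. 33 * harm_weight i)" by (intro sum_mono decay3_bound_le)
  also have "\<dots> = 33 * (\<Sum>i<n. harm_weight i)" by (simp add: sum_distrib_left)
  also have "\<dots> \<le> 33 * (2 + ln (real n))" using sum_harm_weight_le[of n] assms by simp
  also have "\<dots> \<le> 132 * ln (real n)" using L by (simp add: algebra_simps)
  finally show ?thesis .
qed

section \<open>The martingale part\<close>

definition incr :: "complex \<Rightarrow> complex \<Rightarrow> real" where "incr a x = phi a (a + x) - drift a"

definition mart :: "complex \<Rightarrow> complex list \<Rightarrow> nat \<Rightarrow> real" where
  "mart z0 xs k = (\<Sum>j<k. incr (walk z0 xs j) (xs ! j))"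

definition mart_max :: "complex \<Rightarrow> complex list \<Rightarrow> nat \<Rightarrow> real" where
  "mart_max z0 xs k = run_max (\<lambda>j. \<bar>mart z0 xs j\<bar>) k"

lemma sum_incr: "(\<Sum>x\<in>steps. incr a x) = 0"
  by (simp add: incr_def sum_subtractf drift_def card_steps)

lemma mean_sq_incr_le: "(\<Sum>x\<in>steps. (incr a x)^2) / 4 \<le> 100 * decay 2 a"
proof -
  have "(\<Sum>x\<in>steps. (incr a x)^2) = (\<Sum>x\<in>steps. (phi a (a + x))^2) - 4 * drift a ^ 2"
  proof -
    define d where "d = drift a"
    have P: "(\<Sum>x\<in>steps. phi a (a + x)) = 4 * d" by (simp add: d_def drift_def)
    have "(\<Sum>x\<in>steps. (incr a x)^2) = (\<Sum>x\<in>steps. (phi a (a + x))^2 - 2 * d * phi a (a + x) + d^2)"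
      unfolding incr_def d_def by (intro sum.cong refl) (simp add: power2_eq_square algebra_simps)
    also have "\<dots> = (\<Sum>x\<in>steps. (phi a (a + x))^2) - 2 * d * (\<Sum>x\<in>steps. phi a (a + x)) + 4 * d^2"
      by (simp add: sum.distrib sum_subtractf sum_distrib_left card_steps)
    finally show ?thesis unfolding P d_def by (simp add: power2_eq_square)
  qed
  then have "(\<Sum>x\<in>steps. (incr a x)^2) \<le> (\<Sum>x\<in>steps. (phi a (a + x))^2)" by simp
  then show ?thesis using mean_sq_phi_le_decay[of a] by simp
qed

lemma mart_Suc: "mart z0 xs (Suc k) = mart z0 xs k + incr (walk z0 xs k) (xs ! k)"
  by (simp add: mart_def)

lemma mart_0[simp]: "mart z0 xs 0 = 0" by (simp add: mart_def)

lemma mart_take: "j \<le> k \<Longrightarrow> mart z0 (take k xs) j = mart z0 xs j"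
  unfolding mart_def by (intro sum.cong refl) (simp add: walk_take)

lemma mart_max_take: "mart_max z0 (take k xs) k = mart_max z0 xs k"
  unfolding mart_max_def by (intro run_max_cong) (simp add: mart_take)

lemma Theta_eq_mart_plus_drift: "Theta z0 xs k = mart z0 xs k + (\<Sum>j<k. drift (walk z0 xs j))"
proof (induction k)
  case 0 then show ?case by (simp add: Theta_def)
next
  case (Suc k)
  have "Theta z0 xs (Suc k) = Theta z0 xs k + phi (walk z0 xs k) (walk z0 xs (Suc k))"
    unfolding Theta_def by (simp add: sum.cl_ivl_Suc)
  also have "phi (walk z0 xs k) (walk z0 xs (Suc k)) = incr (walk z0 xs k) (xs ! k) + drift (walk z0 xs k)"
    by (simp add: incr_def walk_Suc)
  finally show ?case using Suc.IH by (simp add: mart_Suc)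
qed

lemma mean_sq_add_incr: "(\<Sum>x\<in>steps. (m + incr a x)^2) / 4 = m^2 + (\<Sum>x\<in>steps. (incr a x)^2) / 4"
proof -
  have "(\<Sum>x\<in>steps. (m + incr a x)^2) = (\<Sum>x\<in>steps. m^2 + 2 * m * incr a x + (incr a x)^2)"
    by (simp add: power2_eq_square algebra_simps)
  also have "\<dots> = 4 * m^2 + 2 * m * (\<Sum>x\<in>steps. incr a x) + (\<Sum>x\<in>steps. (incr a x)^2)"
    by (simp add: sum.distrib sum_distrib_left card_steps)
  finally show ?thesis by (simp add: sum_incr)
qed

lemma avg_mart_sq_le: "avg k (\<lambda>xs. mart z0 xs k ^ 2) \<le> 100 * (\<Sum>i<k. decay2_bound i)"
proof (induction k)
  case 0 then show ?case by simp
next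
  case (Suc k)
  define F where "F us x = (mart z0 us k + incr (walk z0 us k) x)^2" for us x
  have "avg (Suc k) (\<lambda>xs. mart z0 xs (Suc k) ^ 2) = avg (Suc k) (\<lambda>xs. F (take k xs) (xs ! k))"
    by (intro avg_cong) (simp add: F_def mart_Suc mart_take walk_take)
  also have "\<dots> = avg k (\<lambda>us. (\<Sum>x\<in>steps. F us x) / 4)" by (rule avg_take_nth) simp
  also have "\<dots> \<le> avg k (\<lambda>us. mart z0 us k ^ 2 + 100 * decay 2 (walk z0 us k))"
  proof (intro avg_mono)
    fix us :: "complex list"
    show "(\<Sum>x\<in>steps. F us x) / 4 \<le> mart z0 us k ^ 2 + 100 * decay 2 (walk z0 us k)"
      unfolding F_def mean_sq_add_incr using mean_sq_incr_le[of "walk z0 us k"] by linarith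
  qed
  also have "\<dots> = avg k (\<lambda>us. mart z0 us k ^ 2) + 100 * avg k (\<lambda>us. decay 2 (walk z0 us k))"
    by (simp add: avg_add avg_cmult)
  also have "\<dots> \<le> 100 * (\<Sum>i<k. decay2_bound i) + 100 * decay2_bound k"
    using Suc.IH avg_decay2_walk_le_bound[of k z0] by simp
  finally show ?case by (simp add: algebra_simps)
qed

lemma avg_max_times_abs_incr_nonneg: assumes "k < n"
  shows "avg n (\<lambda>xs. mart_max z0 xs k * (\<bar>mart z0 xs (Suc k)\<bar> - \<bar>mart z0 xs k\<bar>)) \<ge> 0"
proof -
  define F where "F us x = mart_max z0 us k * (\<bar>mart z0 us k + incr (walk z0 us k) x\<bar> - \<bar>mart z0 us k\<bar>)" for us x
  have "avg n (\<lambda>xs. mart_max z0 xs k * (\<bar>mart z0 xs (Suc k)\<bar> - \<bar>mart z0 xs k\<bar>)) = avg n (\<lambda>xs. F (take k xs) (xs ! k))"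
    by (intro avg_cong) (simp add: F_def mart_Suc mart_take walk_take mart_max_take)
  also have "\<dots> = avg k (\<lambda>us. (\<Sum>x\<in>steps. F us x) / 4)" by (rule avg_take_nth[OF assms])
  also have "\<dots> \<ge> avg k (\<lambda>us. 0)"
  proof (intro avg_mono)
    fix us :: "complex list"
    define M where "M = mart z0 us k"
    define a where "a = walk z0 us k"
    have Y: "mart_max z0 us k \<ge> 0" unfolding mart_max_def by (rule run_max_nonneg) simp
    have "\<bar>\<Sum>x\<in>steps. (M + incr a x)\<bar> \<le> (\<Sum>x\<in>steps. \<bar>M + incr a x\<bar>)" by (rule sum_abs)
    moreover have "(\<Sum>x\<in>steps. (M + incr a x)) = 4 * M" by (simp add: sum.distrib sum_incr card_steps)
    ultimately have "4 * \<bar>M\<bar> \<le> (\<Sum>x\<in>steps. \<bar>M + incr a x\<bar>)" by simp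
    then have "0 \<le> (\<Sum>x\<in>steps. \<bar>M + incr a x\<bar> - \<bar>M\<bar>)" by (simp add: sum_subtractf card_steps)
    then have "0 \<le> mart_max z0 us k * (\<Sum>x\<in>steps. \<bar>M + incr a x\<bar> - \<bar>M\<bar>)" using Y by simp
    then show "0 \<le> (\<Sum>x\<in>steps. F us x) / 4" by (simp add: F_def sum_distrib_left M_def a_def)
  qed
  finally show ?thesis by simp
qed

lemma avg_mart_max_sq_le: "avg n (\<lambda>xs. mart_max z0 xs n ^ 2) \<le> 400 * (\<Sum>i<n. decay2_bound i)"
proof -
  have "avg n (\<lambda>xs. mart_max z0 xs n ^ 2) \<le> avg n (\<lambda>xs. 4 * mart z0 xs n ^ 2
      - 4 * (\<Sum>k<n. mart_max z0 xs k * (\<bar>mart z0 xs (Suc k)\<bar> - \<bar>mart z0 xs k\<bar>)))"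
  proof (intro avg_mono)
    fix xs :: "complex list"
    show "mart_max z0 xs n ^ 2 \<le> 4 * mart z0 xs n ^ 2 - 4 * (\<Sum>k<n. mart_max z0 xs k * (\<bar>mart z0 xs (Suc k)\<bar> - \<bar>mart z0 xs k\<bar>))"
      using run_max_sq_le[of "\<lambda>j. \<bar>mart z0 xs j\<bar>" n] unfolding mart_max_def by simp
  qed
  also have "\<dots> = 4 * avg n (\<lambda>xs. mart z0 xs n ^ 2)
      - 4 * (\<Sum>k<n. avg n (\<lambda>xs. mart_max z0 xs k * (\<bar>mart z0 xs (Suc k)\<bar> - \<bar>mart z0 xs k\<bar>)))"
    by (simp add: avg_diff avg_cmult avg_sum)
  also have "\<dots> \<le> 4 * avg n (\<lambda>xs. mart z0 xs n ^ 2)"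
  proof -
    have "0 \<le> (\<Sum>k<n. avg n (\<lambda>xs. mart_max z0 xs k * (\<bar>mart z0 xs (Suc k)\<bar> - \<bar>mart z0 xs k\<bar>)))"
      by (intro sum_nonneg avg_max_times_abs_incr_nonneg) simp
    then show ?thesis by simp
  qed
  also have "\<dots> \<le> 4 * (100 * (\<Sum>i<n. decay2_bound i))" by (intro mult_left_mono avg_mart_sq_le) simp
  finally show ?thesis by simp
qed

section \<open>The drift part\<close>

lemma avg_sum_decay3_walk_le:
  "avg k (\<lambda>vs. \<Sum>m<k. decay 3 (walk b vs m)) \<le> (\<Sum>m<k. decay3_bound m)"
proof -
  have "avg k (\<lambda>vs. \<Sum>m<k. decay 3 (walk b vs m)) = (\<Sum>m<k. avg k (\<lambda>vs. decay 3 (walk b vs m)))"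
    by (simp add: avg_sum)
  also have "\<dots> = (\<Sum>m<k. avg m (\<lambda>vs. decay 3 (walk b vs m)))"
  proof (intro sum.cong refl)
    fix m assume "m \<in> {..<k}"
    then have "m \<le> k" by simp
    have "avg k (\<lambda>vs. decay 3 (walk b vs m)) = avg k (\<lambda>vs. decay 3 (walk b (take m vs) m))"
      by (simp add: walk_take)
    also have "\<dots> = avg m (\<lambda>vs. decay 3 (walk b vs m))" by (rule avg_take[OF \<open>m \<le> k\<close>])
    finally show "avg k (\<lambda>vs. decay 3 (walk b vs m)) = avg m (\<lambda>vs. decay 3 (walk b vs m))" .
  qed
  also have "\<dots> \<le> (\<Sum>m<k. decay3_bound m)" by (intro sum_mono avg_decay3_walk_le_bound)
  finally show ?thesis .
qed

lemma avg_decay3_pair_le: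
  assumes "i < n"
  shows "avg n (\<lambda>xs. decay 3 (walk z0 xs i) * (\<Sum>j\<in>{i..<n}. decay 3 (walk z0 xs j)))
    \<le> (\<Sum>m<n. decay3_bound m) * decay3_bound i"
proof -
  define H where "H = (\<Sum>m<n. decay3_bound m)"
  have H0: "H \<ge> 0" unfolding H_def by (intro sum_nonneg decay3_bound_nonneg)
  have "avg n (\<lambda>xs. decay 3 (walk z0 xs i) * (\<Sum>j\<in>{i..<n}. decay 3 (walk z0 xs j)))
      \<le> avg i (\<lambda>us. decay 3 (walk z0 us i) * H)"
    unfolding avg_walk_markov[OF less_imp_le[OF assms]]
  proof (intro avg_mono mult_left_mono decay_nonneg)
    fix us :: "complex list"
    have "avg (n - i) (\<lambda>vs. \<Sum>m<n - i. decay 3 (walk (walk z0 us i) vs m)) \<le> (\<Sum>m<n - i. decay3_bound m)"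
      by (rule avg_sum_decay3_walk_le)
    also have "\<dots> \<le> H" unfolding H_def by (intro sum_mono2 decay3_bound_nonneg) auto
    finally show "avg (n - i) (\<lambda>vs. \<Sum>m<n - i. decay 3 (walk (walk z0 us i) vs m)) \<le> H" .
  qed
  also have "\<dots> = H * avg i (\<lambda>us. decay 3 (walk z0 us i))"
    using avg_cmult[of i H "\<lambda>us. decay 3 (walk z0 us i)"] by (simp add: mult.commute)
  also have "\<dots> \<le> H * decay3_bound i"
    using H0 avg_decay3_walk_le_bound[of i z0] by (intro mult_left_mono) auto
  finally show ?thesis by (simp add: H_def)
qed

lemma avg_drift_sum_sq_le: "avg n (\<lambda>xs. (\<Sum>j<n. \<bar>drift (walk z0 xs j)\<bar>)^2) \<le> 20000 * (\<Sum>i<n. decay3_bound i)^2"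
proof -
  define H where "H = (\<Sum>m<n. decay3_bound m)"
  have "avg n (\<lambda>xs. (\<Sum>j<n. \<bar>drift (walk z0 xs j)\<bar>)^2)
      \<le> avg n (\<lambda>xs. 2 * (\<Sum>i<n. \<bar>drift (walk z0 xs i)\<bar> * (\<Sum>j\<in>{i..<n}. \<bar>drift (walk z0 xs j)\<bar>)))"
    by (intro avg_mono square_sum_le_tail_sums) simp
  also have "\<dots> \<le> avg n (\<lambda>xs. 2 * (\<Sum>i<n. 10000 * (decay 3 (walk z0 xs i) * (\<Sum>j\<in>{i..<n}. decay 3 (walk z0 xs j)))))"
  proof (intro avg_mono mult_left_mono sum_mono)
    fix xs :: "complex list" and i
    have a: "\<bar>drift (walk z0 xs i)\<bar> \<le> 100 * decay 3 (walk z0 xs i)" by (rule abs_drift_le_decay)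
    have b: "(\<Sum>j\<in>{i..<n}. \<bar>drift (walk z0 xs j)\<bar>) \<le> (\<Sum>j\<in>{i..<n}. 100 * decay 3 (walk z0 xs j))"
      by (intro sum_mono abs_drift_le_decay)
    have "\<bar>drift (walk z0 xs i)\<bar> * (\<Sum>j\<in>{i..<n}. \<bar>drift (walk z0 xs j)\<bar>)
        \<le> (100 * decay 3 (walk z0 xs i)) * (\<Sum>j\<in>{i..<n}. 100 * decay 3 (walk z0 xs j))"
      by (intro mult_mono a b) (auto intro: sum_nonneg decay_nonneg)
    then show "\<bar>drift (walk z0 xs i)\<bar> * (\<Sum>j\<in>{i..<n}. \<bar>drift (walk z0 xs j)\<bar>)
        \<le> 10000 * (decay 3 (walk z0 xs i) * (\<Sum>j\<in>{i..<n}. decay 3 (walk z0 xs j)))"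
      by (simp add: sum_distrib_left[symmetric])
  qed simp
  also have "\<dots> = 2 * (\<Sum>i<n. 10000 * avg n (\<lambda>xs. decay 3 (walk z0 xs i) * (\<Sum>j\<in>{i..<n}. decay 3 (walk z0 xs j))))"
    by (simp add: avg_cmult avg_sum)
  also have "\<dots> \<le> 2 * (\<Sum>i<n. 10000 * (H * decay3_bound i))"
    using avg_decay3_pair_le[of _ n z0] by (intro mult_left_mono sum_mono) (auto simp: H_def)
  also have "\<dots> = 20000 * H^2" by (simp add: H_def sum_distrib_left[symmetric] power2_eq_square)
  finally show ?thesis by (simp add: H_def)
qed

lemma Max_Theta_sq_le:
  assumes n: "n \<ge> 1"
  shows "Max {\<bar>Theta z0 xs k\<bar>^2 | k. 1 \<le> k \<and> k \<le> n}
     \<le> 2 * mart_max z0 xs n ^ 2 + 2 * (\<Sum>j<n. \<bar>drift (walk z0 xs j)\<bar>)^2"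
proof -
  define T where "T = (\<Sum>j<n. \<bar>drift (walk z0 xs j)\<bar>)"
  have eq: "{\<bar>Theta z0 xs k\<bar>^2 | k. 1 \<le> k \<and> k \<le> n} = (\<lambda>k. \<bar>Theta z0 xs k\<bar>^2) ` {1..n}" by auto
  have "\<bar>Theta z0 xs k\<bar>^2 \<le> 2 * mart_max z0 xs n ^ 2 + 2 * T^2" if k: "k \<in> {1..n}" for k
  proof -
    define M where "M = mart z0 xs k"
    define D where "D = (\<Sum>j<k. drift (walk z0 xs j))"
    have th: "Theta z0 xs k = M + D" by (simp add: M_def D_def Theta_eq_mart_plus_drift)
    have "\<bar>M\<bar> \<le> mart_max z0 xs n" unfolding M_def mart_max_def using k
      by (intro run_max_ge[where y="\<lambda>j. \<bar>mart z0 xs j\<bar>", simplified]) auto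
    then have M2: "M^2 \<le> mart_max z0 xs n ^ 2" by (intro square_le_of_abs_le)
    have "\<bar>D\<bar> \<le> (\<Sum>j<k. \<bar>drift (walk z0 xs j)\<bar>)" unfolding D_def by (rule sum_abs)
    also have "\<dots> \<le> T" unfolding T_def using k by (intro sum_mono2) auto
    finally have D2: "D^2 \<le> T^2" by (intro square_le_of_abs_le)
    have "\<bar>Theta z0 xs k\<bar>^2 = (M + D)^2" by (simp add: th)
    also have "\<dots> \<le> 2 * M^2 + 2 * D^2"
      using sum_squares_ge_zero[of "M - D" 0] by (simp add: power2_eq_square algebra_simps)
    finally show ?thesis using M2 D2 by linarith
  qed
  then show ?thesis unfolding eq T_def[symmetric] using n by (subst Max_le_iff) auto
qed

theorem lemmaA1:
  shows "\<exists>C::real. \<forall>(z0::complex) (n::nat). z0 \<noteq> 0 \<longrightarrow> n \<ge> 2 \<longrightarrow>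
     measure_pmf.expectation (replicate_pmf n step_pmf)
       (\<lambda>xs. Max {\<bar>Theta z0 xs k\<bar>^2 | k. 1 \<le> k \<and> k \<le> n})
     \<le> C * (ln (real n))^2"
proof (intro exI allI impI)
  fix z0 :: complex and n :: nat
  assume n: "n \<ge> 2"
  define L where "L = ln (real n)"
  have "measure_pmf.expectation (replicate_pmf n step_pmf)
       (\<lambda>xs. Max {\<bar>Theta z0 xs k\<bar>^2 | k. 1 \<le> k \<and> k \<le> n})
      \<le> avg n (\<lambda>xs. 2 * mart_max z0 xs n ^ 2 + 2 * (\<Sum>j<n. \<bar>drift (walk z0 xs j)\<bar>)^2)"
    unfolding expectation_replicate_step_pmf using n by (intro avg_mono Max_Theta_sq_le) simp
  also have "\<dots> \<le> 2 * (400 * (\<Sum>i<n. decay2_bound i)) + 2 * (20000 * (\<Sum>i<n. decay3_bound i)^2)"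
    unfolding avg_add avg_cmult by (intro add_mono mult_left_mono avg_mart_max_sq_le avg_drift_sum_sq_le) simp_all
  also have "\<dots> \<le> 2 * (400 * (400 * L^2)) + 2 * (20000 * (132 * L)^2)"
    using n sum_decay2_bound_le sum_decay3_bound_le
    by (intro add_mono mult_left_mono power_mono sum_nonneg decay3_bound_nonneg) (auto simp: L_def)
  also have "\<dots> \<le> 1000000000 * L^2" by (simp add: power2_eq_square)
  finally show "measure_pmf.expectation (replicate_pmf n step_pmf)
       (\<lambda>xs. Max {\<bar>Theta z0 xs k\<bar>^2 | k. 1 \<le> k \<and> k \<le> n})
     \<le> 1000000000 * (ln (real n))^2" by (simp add: L_def)
qed

end
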